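(* Let $(\Omega,\mathcal{F},\mathbb{P})$ be a probability space, $\mathcal{G}\subseteq\mathcal{F}$ a sub-$\sigma$-algebra, and $m\in\mathbb{N}$. Let $X:\Omega\to\mathcal{M}_{\mathcal{I}}^{(m)}$ be $\mathcal{G}$-measurable and almost surely bounded, with $X(\omega)=\langle [a_k(\omega),a_k(\omega)]\rangle_{0\le k\le m}$ (degenerate intervals) for all $\omega\in\Omega$, and let $Y:\Omega\to\mathcal{M}_{\mathcal{I}}^{(m)}$ be a random variable. Then $\mathbb{E}[X\otimes Y\mid\mathcal{G}]=X\otimes\mathbb{E}[Y\mid\mathcal{G}]$ almost surely.
   Context: The interval semiring $\mathcal{I}$ has carrier $\{[a,b]:a\le b\}$, $[a,b]+_{\mathcal{I}}[c,d]=[a+c,b+d]$, $[a,b]\cdot_{\mathcal{I}}[c,d]=[\min S,\max S]$ with $S=\{ac,ad,bc,bd\}$. The moment semiring $\mathcal{M}_{\mathcal{I}}^{(m)}$ consists of vectors $\langle u_k\rangle_{0\le k\le m}$ of intervals with pointwise addition $\oplus$ and product $\langle u_k\rangle\otimes\langle v_k\rangle=\big\langle \sum_{i=0}^k\binom{k}{i}\times(u_i\cdot_{\mathcal{I}} v_{k-i})\big\rangle_{0\le k\le m}$ (sums in $+_{\mathcal{I}}$, $n\times u$ meaning the $n$-fold $+_{\mathcal{I}}$-sum of $u$). (Conditional) expectations of $\mathcal{M}_{\mathcal{I}}^{(m)}$-valued random variables are taken componentwise on the interval endpoints (for random variables whose endpoints are integrable). *)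

theory Defs
  imports "HOL-Probability.Probability"
begin

text \<open>Intervals [a,b] are represented as pairs (a,b) with a \<le> b.\<close>
type_synonym interval = "real \<times> real"

definition iadd :: "interval \<Rightarrow> interval \<Rightarrow> interval" where
  "iadd u v = (fst u + fst v, snd u + snd v)"

definition imul :: "interval \<Rightarrow> interval \<Rightarrow> interval" where
  "imul u v = (let S = {fst u * fst v, fst u * snd v, snd u * fst v, snd u * snd v}
               in (Min S, Max S))"

fun iscale :: "nat \<Rightarrow> interval \<Rightarrow> interval" where
  "iscale 0 u = (0, 0)"
| "iscale (Suc n) u = iadd u (iscale n u)"

fun isum :: "(nat \<Rightarrow> interval) \<Rightarrow> nat \<Rightarrow> interval" where
  "isum f 0 = f 0"
| "isum f (Suc k) = iadd (isum f k) (f (Suc k))"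

text \<open>Moment-semiring elements: vectors nat \<Rightarrow> interval, only components 0..m matter.\<close>
definition mprod :: "(nat \<Rightarrow> interval) \<Rightarrow> (nat \<Rightarrow> interval) \<Rightarrow> nat \<Rightarrow> interval" where
  "mprod u v k = isum (\<lambda>i. iscale (k choose i) (imul (u i) (v (k - i)))) k"

definition mcond_exp :: "'a measure \<Rightarrow> 'a measure \<Rightarrow> ('a \<Rightarrow> nat \<Rightarrow> interval) \<Rightarrow> 'a \<Rightarrow> nat \<Rightarrow> interval" where
  "mcond_exp M G Z \<omega> k =
     (real_cond_exp M G (\<lambda>x. fst (Z x k)) \<omega>, real_cond_exp M G (\<lambda>x. snd (Z x k)) \<omega>)"

end

theory Submission
  imports Defs
begin

(*
  For a degenerate interval [x,x] and c \<le> d one has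
  [x,x] \<cdot> [c,d] = [x\<^sub>+ c - x\<^sub>- d, x\<^sub>+ d - x\<^sub>- c] with x\<^sub>+ = max x 0 and x\<^sub>- = max (-x) 0.
  Hence, when X is degenerate, both endpoints of every component of X \<otimes> Y are finite
  linear combinations of endpoints of Y whose coefficients are bounded G-measurable
  functions of X; these coefficients can be pulled out of the conditional expectation.
  Since conditional expectation preserves the order of the endpoints of Y, the same
  formula describes X \<otimes> E[Y|G], which gives the identity.
*)

lemma iscale_eq: "iscale n u = (real n * fst u, real n * snd u)"
  by (induction n) (auto simp: iadd_def algebra_simps)

lemma isum_eq: "isum f k = (\<Sum>i\<le>k. fst (f i), \<Sum>i\<le>k. snd (f i))"
  by (induction k) (auto simp: iadd_def)

lemma imul_degenerate:
  assumes "c \<le> d"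
  shows "imul (x, x) (c, d) = (max x 0 * c - max (- x) 0 * d, max x 0 * d - max (- x) 0 * c)"
proof (cases "x \<ge> 0")
  case True
  then have "x * c \<le> x * d" using assms mult_left_mono by blast
  then show ?thesis using True by (auto simp: imul_def Let_def min_def max_def)
next
  case False
  then have "x * d \<le> x * c" using assms mult_left_mono_neg by force
  then show ?thesis using False by (auto simp: imul_def Let_def min_def max_def)
qed

definition mprod_deg_lower :: "(nat \<Rightarrow> real) \<Rightarrow> (nat \<Rightarrow> real) \<Rightarrow> (nat \<Rightarrow> real) \<Rightarrow> nat \<Rightarrow> real" where
  "mprod_deg_lower x lo hi k =
     (\<Sum>i\<le>k. real (k choose i) * (max (x i) 0 * lo (k - i) - max (- x i) 0 * hi (k - i)))"

lemma mprod_degenerate: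
  assumes "\<And>i. i \<le> k \<Longrightarrow> u i = (x i, x i)"
    and "\<And>i. i \<le> k \<Longrightarrow> v i = (lo i, hi i)" and "\<And>i. i \<le> k \<Longrightarrow> lo i \<le> hi i"
  shows "mprod u v k = (mprod_deg_lower x lo hi k, mprod_deg_lower x hi lo k)"
proof -
  have "imul (u i) (v (k - i)) =
      (max (x i) 0 * lo (k - i) - max (- x i) 0 * hi (k - i),
       max (x i) 0 * hi (k - i) - max (- x i) 0 * lo (k - i))" if "i \<le> k" for i
    using imul_degenerate[OF assms(3), of "k - i" "x i"] assms(1)[OF that] assms(2)[of "k - i"] by simp
  then show ?thesis
    unfolding mprod_def isum_eq iscale_eq mprod_deg_lower_def by (auto intro!: sum.cong)
qed

lemma integrable_bounded_mult:
  fixes p f :: "'a \<Rightarrow> real"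
  assumes "p \<in> borel_measurable M" and "AE x in M. \<bar>p x\<bar> \<le> C" and "integrable M f"
  shows "integrable M (\<lambda>x. p x * f x)"
proof (rule Bochner_Integration.integrable_bound)
  show "integrable M (\<lambda>x. C * f x)"
    using assms(3) by simp
  show "AE x in M. norm (p x * f x) \<le> norm (C * f x)"
    using assms(2) by eventually_elim (auto simp: abs_mult intro: mult_right_mono)
qed (use assms in auto)

lemma (in sigma_finite_subalgebra) real_cond_exp_bounded_mult:
  fixes p f :: "'a \<Rightarrow> real"
  assumes "p \<in> borel_measurable F" and "AE x in M. \<bar>p x\<bar> \<le> C" and "integrable M f"
  shows "AE x in M. real_cond_exp M F (\<lambda>x. p x * f x) x = p x * real_cond_exp M F f x"
  using assms measurable_from_subalg[OF subalg assms(1)]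
  by (intro real_cond_exp_mult integrable_bounded_mult[where C=C]) auto

lemma (in sigma_finite_subalgebra) real_cond_exp_cong_space:
  assumes "\<And>x. x \<in> space M \<Longrightarrow> f x = g x" and "g \<in> borel_measurable M"
  shows "AE x in M. real_cond_exp M F f x = real_cond_exp M F g x"
  using assms measurable_cong[of M f g] by (intro real_cond_exp_cong) auto

lemma (in sigma_finite_subalgebra) real_cond_exp_bounded_lincomb:
  fixes p q f g :: "'a \<Rightarrow> real"
  assumes p: "p \<in> borel_measurable F" "AE \<omega> in M. \<bar>p \<omega>\<bar> \<le> C"
    and q: "q \<in> borel_measurable F" "AE \<omega> in M. \<bar>q \<omega>\<bar> \<le> C"
    and f: "integrable M f" and g: "integrable M g"
  shows "AE \<omega> in M. real_cond_exp M F (\<lambda>\<omega>. c * (p \<omega> * f \<omega> - q \<omega> * g \<omega>)) \<omega> =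
    c * (p \<omega> * real_cond_exp M F f \<omega> - q \<omega> * real_cond_exp M F g \<omega>)"
proof -
  have int: "integrable M (\<lambda>\<omega>. p \<omega> * f \<omega>)" "integrable M (\<lambda>\<omega>. q \<omega> * g \<omega>)"
    using p q f g by (auto intro!: integrable_bounded_mult measurable_from_subalg[OF subalg])
  have "AE \<omega> in M. real_cond_exp M F (\<lambda>\<omega>. c * (p \<omega> * f \<omega> - q \<omega> * g \<omega>)) \<omega> =
      c * real_cond_exp M F (\<lambda>\<omega>. p \<omega> * f \<omega> - q \<omega> * g \<omega>) \<omega>"
    using int by (intro real_cond_exp_cmult) auto
  moreover have "AE \<omega> in M. real_cond_exp M F (\<lambda>\<omega>. p \<omega> * f \<omega> - q \<omega> * g \<omega>) \<omega> =
      real_cond_exp M F (\<lambda>\<omega>. p \<omega> * f \<omega>) \<omega> - real_cond_exp M F (\<lambda>\<omega>. q \<omega> * g \<omega>) \<omega>"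
    using int by (rule real_cond_exp_diff)
  moreover note real_cond_exp_bounded_mult[OF p f] real_cond_exp_bounded_mult[OF q g]
  ultimately show ?thesis
    by eventually_elim simp
qed

lemma (in sigma_finite_subalgebra) real_cond_exp_mprod_deg_lower:
  fixes x lo hi :: "nat \<Rightarrow> 'a \<Rightarrow> real"
  assumes x_meas: "\<And>i. i \<le> k \<Longrightarrow> x i \<in> borel_measurable F"
    and x_bdd: "AE \<omega> in M. \<forall>i\<le>k. \<bar>x i \<omega>\<bar> \<le> C"
    and lo: "\<And>j. j \<le> k \<Longrightarrow> integrable M (lo j)" and hi: "\<And>j. j \<le> k \<Longrightarrow> integrable M (hi j)"
    and Z: "\<And>\<omega>. \<omega> \<in> space M \<Longrightarrow> Z \<omega> = mprod_deg_lower (\<lambda>i. x i \<omega>) (\<lambda>j. lo j \<omega>) (\<lambda>j. hi j \<omega>) k"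
  shows "AE \<omega> in M. real_cond_exp M F Z \<omega> =
    mprod_deg_lower (\<lambda>i. x i \<omega>) (\<lambda>j. real_cond_exp M F (lo j) \<omega>) (\<lambda>j. real_cond_exp M F (hi j) \<omega>) k"
proof -
  define pos where "pos i \<omega> = max (x i \<omega>) 0" for i \<omega>
  define neg where "neg i \<omega> = max (- x i \<omega>) 0" for i \<omega>
  define t where "t i \<omega> = real (k choose i) * (pos i \<omega> * lo (k - i) \<omega> - neg i \<omega> * hi (k - i) \<omega>)"
    for i \<omega>
  have pos_neg_meas: "pos i \<in> borel_measurable F" "neg i \<in> borel_measurable F" if "i \<le> k" for i
    using x_meas[OF that] unfolding pos_def neg_def by auto
  have pos_neg_bdd: "AE \<omega> in M. \<bar>pos i \<omega>\<bar> \<le> C" "AE \<omega> in M. \<bar>neg i \<omega>\<bar> \<le> C" if "i \<le> k" for i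
    using x_bdd by (eventually_elim, use that in \<open>auto simp: pos_def neg_def\<close>)+
  have t_int: "integrable M (t i)" for i
  proof (cases "i \<le> k")
    case True
    then show ?thesis unfolding t_def
      by (intro integrable_mult_right Bochner_Integration.integrable_diff integrable_bounded_mult[where C=C]
          measurable_from_subalg[OF subalg] pos_neg_meas pos_neg_bdd lo hi; simp)+
  next
    case False
    then have "t i = (\<lambda>_. 0)"
      by (simp add: t_def fun_eq_iff)
    then show ?thesis by simp
  qed
  have "Z \<omega> = (\<Sum>i\<le>k. t i \<omega>)" if "\<omega> \<in> space M" for \<omega>
    using Z[OF that] by (simp add: mprod_deg_lower_def t_def pos_def neg_def)
  then have "AE \<omega> in M. real_cond_exp M F Z \<omega> = real_cond_exp M F (\<lambda>\<omega>. \<Sum>i\<le>k. t i \<omega>) \<omega>"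
    using t_int by (intro real_cond_exp_cong_space) auto
  moreover have "AE \<omega> in M. real_cond_exp M F (\<lambda>\<omega>. \<Sum>i\<le>k. t i \<omega>) \<omega> = (\<Sum>i\<le>k. real_cond_exp M F (t i) \<omega>)"
    using t_int by (rule real_cond_exp_sum)
  moreover have "AE \<omega> in M. \<forall>i\<in>{..k}. real_cond_exp M F (t i) \<omega> =
      real (k choose i) * (pos i \<omega> * real_cond_exp M F (lo (k - i)) \<omega>
                           - neg i \<omega> * real_cond_exp M F (hi (k - i)) \<omega>)"
    unfolding t_def using pos_neg_meas pos_neg_bdd lo hi
    by (intro AE_finite_allI real_cond_exp_bounded_lincomb) auto
  ultimately show ?thesis
    unfolding mprod_deg_lower_def pos_def neg_def by eventually_elim simp
qed

lemma (in sigma_finite_subalgebra) mcond_exp_mprod_degenerate: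
  assumes X_deg: "\<And>\<omega> i. \<omega> \<in> space M \<Longrightarrow> i \<le> k \<Longrightarrow> X \<omega> i = (x i \<omega>, x i \<omega>)"
    and x_meas: "\<And>i. i \<le> k \<Longrightarrow> x i \<in> borel_measurable F"
    and x_bdd: "AE \<omega> in M. \<forall>i\<le>k. \<bar>x i \<omega>\<bar> \<le> C"
    and Y_int: "\<And>\<omega> i. \<omega> \<in> space M \<Longrightarrow> i \<le> k \<Longrightarrow> fst (Y \<omega> i) \<le> snd (Y \<omega> i)"
    and Y_lo: "\<And>i. i \<le> k \<Longrightarrow> integrable M (\<lambda>\<omega>. fst (Y \<omega> i))"
    and Y_hi: "\<And>i. i \<le> k \<Longrightarrow> integrable M (\<lambda>\<omega>. snd (Y \<omega> i))"
  shows "AE \<omega> in M. mcond_exp M F (\<lambda>\<omega>. mprod (X \<omega>) (Y \<omega>)) \<omega> k = mprod (X \<omega>) (mcond_exp M F Y \<omega>) k"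
proof -
  define lo where "lo i = (\<lambda>\<omega>. fst (Y \<omega> i))" for i
  define hi where "hi i = (\<lambda>\<omega>. snd (Y \<omega> i))" for i
  define E where "E f \<omega> = real_cond_exp M F f \<omega>" for f \<omega>
  have lo_hi_int: "integrable M (lo i)" "integrable M (hi i)" if "i \<le> k" for i
    using Y_lo[OF that] Y_hi[OF that] by (simp_all add: lo_def hi_def)
  have XY: "mprod (X \<omega>) (Y \<omega>) k =
      (mprod_deg_lower (\<lambda>i. x i \<omega>) (\<lambda>j. lo j \<omega>) (\<lambda>j. hi j \<omega>) k,
       mprod_deg_lower (\<lambda>i. x i \<omega>) (\<lambda>j. hi j \<omega>) (\<lambda>j. lo j \<omega>) k)" if "\<omega> \<in> space M" for \<omega>
    using that X_deg Y_int by (intro mprod_degenerate) (auto simp: lo_def hi_def)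
  have "AE \<omega> in M. E (\<lambda>\<omega>. fst (mprod (X \<omega>) (Y \<omega>) k)) \<omega> =
      mprod_deg_lower (\<lambda>i. x i \<omega>) (\<lambda>j. E (lo j) \<omega>) (\<lambda>j. E (hi j) \<omega>) k"
    unfolding E_def using x_meas x_bdd lo_hi_int XY by (intro real_cond_exp_mprod_deg_lower) auto
  moreover have "AE \<omega> in M. E (\<lambda>\<omega>. snd (mprod (X \<omega>) (Y \<omega>) k)) \<omega> =
      mprod_deg_lower (\<lambda>i. x i \<omega>) (\<lambda>j. E (hi j) \<omega>) (\<lambda>j. E (lo j) \<omega>) k"
    unfolding E_def using x_meas x_bdd lo_hi_int XY by (intro real_cond_exp_mprod_deg_lower) auto
  moreover have "AE \<omega> in M. \<forall>i\<in>{..k}. E (lo i) \<omega> \<le> E (hi i) \<omega>"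
    unfolding E_def using Y_int lo_hi_int
    by (intro AE_finite_allI real_cond_exp_mono) (auto simp: lo_def hi_def)
  ultimately show ?thesis
    using AE_space
  proof eventually_elim
    case (elim \<omega>)
    have "mprod (X \<omega>) (mcond_exp M F Y \<omega>) k =
      (mprod_deg_lower (\<lambda>i. x i \<omega>) (\<lambda>j. E (lo j) \<omega>) (\<lambda>j. E (hi j) \<omega>) k,
       mprod_deg_lower (\<lambda>i. x i \<omega>) (\<lambda>j. E (hi j) \<omega>) (\<lambda>j. E (lo j) \<omega>) k)"
      using elim X_deg by (intro mprod_degenerate) (auto simp: mcond_exp_def E_def lo_def hi_def)
    with elim show ?case
      by (simp add: mcond_exp_def E_def prod_eq_iff)
  qed
qed

theorem lemmaE5:
  fixes M G :: "'a measure" and m :: nat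
    and X Y :: "'a \<Rightarrow> nat \<Rightarrow> interval" and a :: "nat \<Rightarrow> 'a \<Rightarrow> real"
  assumes "prob_space M"
    and "sigma_finite_subalgebra M G"
    and X_deg: "\<And>\<omega> k. \<omega> \<in> space M \<Longrightarrow> k \<le> m \<Longrightarrow> X \<omega> k = (a k \<omega>, a k \<omega>)"
    and X_meas: "\<And>k. k \<le> m \<Longrightarrow> a k \<in> borel_measurable G"
    and X_bdd: "\<exists>C. AE \<omega> in M. \<forall>k\<le>m. \<bar>a k \<omega>\<bar> \<le> C"
    and Y_int: "\<And>\<omega> k. \<omega> \<in> space M \<Longrightarrow> k \<le> m \<Longrightarrow> fst (Y \<omega> k) \<le> snd (Y \<omega> k)"
    and Y_lo: "\<And>k. k \<le> m \<Longrightarrow> integrable M (\<lambda>\<omega>. fst (Y \<omega> k))"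
    and Y_hi: "\<And>k. k \<le> m \<Longrightarrow> integrable M (\<lambda>\<omega>. snd (Y \<omega> k))"
  shows "AE \<omega> in M. \<forall>k\<le>m.
           mcond_exp M G (\<lambda>x. mprod (X x) (Y x)) \<omega> k
           = mprod (X \<omega>) (mcond_exp M G Y \<omega>) k"
proof -
  interpret sigma_finite_subalgebra M G by (rule assms(2))
  obtain C where C: "AE \<omega> in M. \<forall>k\<le>m. \<bar>a k \<omega>\<bar> \<le> C" using X_bdd by blast
  have "AE \<omega> in M. \<forall>k\<in>{..m}. mcond_exp M G (\<lambda>x. mprod (X x) (Y x)) \<omega> k
           = mprod (X \<omega>) (mcond_exp M G Y \<omega>) k"
  proof (rule AE_finite_allI)
    fix k assume "k \<in> {..m}"
    then have k: "k \<le> m" by simp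
    have "AE \<omega> in M. \<forall>i\<le>k. \<bar>a i \<omega>\<bar> \<le> C"
      using C by eventually_elim (use k in auto)
    then show "AE \<omega> in M. mcond_exp M G (\<lambda>x. mprod (X x) (Y x)) \<omega> k
           = mprod (X \<omega>) (mcond_exp M G Y \<omega>) k"
      using k X_deg X_meas Y_int Y_lo Y_hi by (intro mcond_exp_mprod_degenerate) auto
  qed simp
  then show ?thesis by eventually_elim auto
qed

end
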